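(* Let $\mathcal A=(S,R)$ be a finitary argumentation network ($S\neq\varnothing$, $R\subseteq S\times S$, each element has finitely many attackers) and let $\Delta_{\mathcal A}$ be the $\mathbf{CN}$-theory $$\Delta_{\mathcal A}=\{x\mid x\in S \text{ unattacked}\}\cup\{y\leftrightarrow \textstyle\bigwedge_{zRy}Nz\mid y\in S\}\cup\{z\to Ny\mid zRy\}\cup\{(\textstyle\bigwedge_{zRy}\neg z)\wedge(\bigvee_{zRy}\neg Nz)\to \neg y\wedge\neg Ny\mid y\in S\}.$$ Then $\Delta_{\mathcal A}$ is $\mathbf{CN}$-consistent.
   Context: The logic $\mathbf{CN}$: the elements of $S$ are basic atoms; atomic formulas are $q$ and $Nq$ for basic atoms $q$; formulas are built with classical connectives; $\Delta\vdash_{\mathbf{CN}}A$ iff $\Delta\cup\{Nq\to\neg q\mid q\text{ basic atom}\}\vdash A$ in classical propositional logic (treating each $q$ and $Nq$ as distinct classical atoms). Consistency means $\Delta_{\mathcal A}\nvdash_{\mathbf{CN}}\bot$. Empty conjunctions are $\top$, empty disjunctions are $\bot$. *)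

theory Defs
  imports Main
begin

datatype 'a fm =
    Atom 'a
  | NAtom 'a
  | FTrue
  | FFalse
  | FNot "'a fm"
  | FAnd "'a fm" "'a fm"
  | FOr "'a fm" "'a fm"
  | FImp "'a fm" "'a fm"
  | FIff "'a fm" "'a fm"

text \<open>Classical valuation: q and N q are independent classical atoms.\<close>
fun eval :: "('a \<Rightarrow> bool) \<Rightarrow> ('a \<Rightarrow> bool) \<Rightarrow> 'a fm \<Rightarrow> bool" where
  "eval v w (Atom q) = v q"
| "eval v w (NAtom q) = w q"
| "eval v w FTrue = True"
| "eval v w FFalse = False"
| "eval v w (FNot A) = (\<not> eval v w A)"
| "eval v w (FAnd A B) = (eval v w A \<and> eval v w B)"
| "eval v w (FOr A B) = (eval v w A \<or> eval v w B)"
| "eval v w (FImp A B) = (eval v w A \<longrightarrow> eval v w B)"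
| "eval v w (FIff A B) = (eval v w A \<longleftrightarrow> eval v w B)"

definition tautology :: "'a fm \<Rightarrow> bool" where
  "tautology A \<longleftrightarrow> (\<forall>v w. eval v w A)"

inductive cpl_derives :: "'a fm set \<Rightarrow> 'a fm \<Rightarrow> bool" where
  hyp: "A \<in> \<Gamma> \<Longrightarrow> cpl_derives \<Gamma> A"
| taut: "tautology A \<Longrightarrow> cpl_derives \<Gamma> A"
| mp: "cpl_derives \<Gamma> (FImp A B) \<Longrightarrow> cpl_derives \<Gamma> A \<Longrightarrow> cpl_derives \<Gamma> B"

definition CN_axioms :: "'a set \<Rightarrow> 'a fm set" where
  "CN_axioms S = {FImp (NAtom q) (FNot (Atom q)) | q. q \<in> S}"

definition CN_derives :: "'a set \<Rightarrow> 'a fm set \<Rightarrow> 'a fm \<Rightarrow> bool" where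
  "CN_derives S \<Delta> A \<longleftrightarrow> cpl_derives (\<Delta> \<union> CN_axioms S) A"

definition CN_consistent :: "'a set \<Rightarrow> 'a fm set \<Rightarrow> bool" where
  "CN_consistent S \<Delta> \<longleftrightarrow> \<not> CN_derives S \<Delta> FFalse"

fun conjs :: "'a fm list \<Rightarrow> 'a fm" where
  "conjs [] = FTrue"
| "conjs (A # As) = FAnd A (conjs As)"

fun disjs :: "'a fm list \<Rightarrow> 'a fm" where
  "disjs [] = FFalse"
| "disjs (A # As) = FOr A (disjs As)"

text \<open>Some enumeration of a finite set (the order is irrelevant).\<close>
definition enum_set :: "'b set \<Rightarrow> 'b list" where
  "enum_set A = (SOME xs. set xs = A \<and> distinct xs)"

definition attackers :: "('a \<times> 'a) set \<Rightarrow> 'a \<Rightarrow> 'a set" where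
  "attackers R y = {z. (z, y) \<in> R}"

definition finitary_network :: "'a set \<Rightarrow> ('a \<times> 'a) set \<Rightarrow> bool" where
  "finitary_network S R \<longleftrightarrow> S \<noteq> {} \<and> R \<subseteq> S \<times> S \<and> (\<forall>y\<in>S. finite (attackers R y))"

definition Delta :: "'a set \<Rightarrow> ('a \<times> 'a) set \<Rightarrow> 'a fm set" where
  "Delta S R =
     {Atom x | x. x \<in> S \<and> attackers R x = {}}
   \<union> {FIff (Atom y) (conjs (map NAtom (enum_set (attackers R y)))) | y. y \<in> S}
   \<union> {FImp (Atom z) (NAtom y) | z y. (z, y) \<in> R}
   \<union> {FImp (FAnd (conjs (map (\<lambda>z. FNot (Atom z)) (enum_set (attackers R y))))
                 (disjs (map (\<lambda>z. FNot (NAtom z)) (enum_set (attackers R y)))))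
           (FAnd (FNot (Atom y)) (FNot (NAtom y))) | y. y \<in> S}"

end

theory Submission
  imports Defs
begin

text \<open>Any complete extension E of the network gives a classical model of the theory: an argument
  is true iff it lies in E, and its N-atom is true iff it is attacked by E. The grounded extension,
  the least fixed point of the characteristic function, is such an extension, and a theory with a
  model is consistent because classical derivability is sound.\<close>

lemma cpl_derives_sound:
  assumes "cpl_derives \<Gamma> A" and "\<forall>B\<in>\<Gamma>. eval v w B"
  shows "eval v w A"
  using assms by (induction rule: cpl_derives.induct) (auto simp: tautology_def)

lemma CN_consistent_if_model:
  assumes "\<forall>B\<in>\<Delta> \<union> CN_axioms S. eval v w B"
  shows "CN_consistent S \<Delta>"
  using cpl_derives_sound[OF _ assms] unfolding CN_consistent_def CN_derives_def by fastforce

lemma set_enum_set: "finite A \<Longrightarrow> set (enum_set A) = A"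
  unfolding enum_set_def
  by (rule someI2_ex[where P = "\<lambda>xs. set xs = A \<and> distinct xs"]) (auto dest: finite_distinct_list)

lemma eval_conjs: "eval v w (conjs As) \<longleftrightarrow> (\<forall>A\<in>set As. eval v w A)"
  by (induction As) auto

lemma eval_disjs: "eval v w (disjs As) \<longleftrightarrow> (\<exists>A\<in>set As. eval v w A)"
  by (induction As) auto

definition attacked :: "('a \<times> 'a) set \<Rightarrow> 'a set \<Rightarrow> 'a set" where
  "attacked R E = {y. \<exists>c\<in>E. (c, y) \<in> R}"

definition defended :: "('a \<times> 'a) set \<Rightarrow> 'a set \<Rightarrow> 'a set" where
  "defended R E = {y. attackers R y \<subseteq> attacked R E}"

definition grounded :: "('a \<times> 'a) set \<Rightarrow> 'a set" where
  "grounded R = lfp (defended R)"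

lemma mono_defended: "mono (defended R)"
  unfolding mono_def defended_def attacked_def by blast

lemma defended_grounded: "defended R (grounded R) = grounded R"
  unfolding grounded_def by (rule lfp_fixpoint[OF mono_defended])

lemma grounded_conflict_free: "grounded R \<inter> attacked R (grounded R) = {}"
proof -
  let ?G = "grounded R"
  have "?G \<subseteq> - attacked R ?G"
  proof (rule lfp_induct[OF mono_defended, folded grounded_def], rule subsetI)
    fix y assume y: "y \<in> defended R (?G \<inter> - attacked R ?G)"
    show "y \<in> - attacked R ?G"
    proof (rule ComplI)
      assume "y \<in> attacked R ?G"
      then obtain z where z: "z \<in> ?G" "(z, y) \<in> R" by (auto simp: attacked_def)
      \<comment> \<open>z is counter-attacked by some unattacked c in G, yet G defends z against c\<close>
      then obtain c where c: "c \<in> ?G" "c \<notin> attacked R ?G" "(c, z) \<in> R"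
        using y z(2) unfolding defended_def attackers_def attacked_def by blast
      from z(1) c(3) have "c \<in> attacked R ?G"
        by (subst (asm) defended_grounded[symmetric]) (auto simp: defended_def attackers_def)
      with c(2) show False by contradiction
    qed
  qed
  then show ?thesis by blast
qed

lemma eval_CN_axioms:
  assumes "E \<inter> attacked R E = {}"
  shows "\<forall>B\<in>CN_axioms S. eval (\<lambda>y. y \<in> E) (\<lambda>y. y \<in> attacked R E) B"
  using assms unfolding CN_axioms_def by auto

lemma eval_Delta:
  assumes "finitary_network S R" and "defended R E = E"
  shows "\<forall>B\<in>Delta S R. eval (\<lambda>y. y \<in> E) (\<lambda>y. y \<in> attacked R E) B"
proof
  have enum: "set (enum_set (attackers R y)) = attackers R y" if "y \<in> S" for y
    using assms(1) that by (simp add: finitary_network_def set_enum_set)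
  have in_E: "y \<in> E \<longleftrightarrow> attackers R y \<subseteq> attacked R E" for y
    by (subst assms(2)[symmetric]) (simp add: defended_def)
  fix B assume "B \<in> Delta S R"
  then consider (unattacked) x where "B = Atom x" "attackers R x = {}"
    | (iff) y where "B = FIff (Atom y) (conjs (map NAtom (enum_set (attackers R y))))" "y \<in> S"
    | (attack) z y where "B = FImp (Atom z) (NAtom y)" "(z, y) \<in> R"
    | (undecided) y where "B = FImp (FAnd (conjs (map (\<lambda>z. FNot (Atom z)) (enum_set (attackers R y))))
                 (disjs (map (\<lambda>z. FNot (NAtom z)) (enum_set (attackers R y)))))
           (FAnd (FNot (Atom y)) (FNot (NAtom y)))" "y \<in> S"
    unfolding Delta_def by blast
  then show "eval (\<lambda>y. y \<in> E) (\<lambda>y. y \<in> attacked R E) B"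
  proof cases
    case unattacked then show ?thesis by (simp add: in_E)
  next
    case iff then show ?thesis by (auto simp: eval_conjs enum in_E)
  next
    case attack then show ?thesis by (auto simp: attacked_def)
  next
    case undecided
    have "y \<notin> attacked R E" if "\<forall>z\<in>attackers R y. z \<notin> E"
      using that by (auto simp: attacked_def attackers_def)
    then show ?thesis using undecided by (auto simp: eval_conjs eval_disjs enum in_E)
  qed
qed

theorem corollary6:
  fixes S :: "'a set" and R :: "('a \<times> 'a) set"
  assumes "finitary_network S R"
  shows "CN_consistent S (Delta S R)"
proof (rule CN_consistent_if_model)
  let ?v = "\<lambda>y. y \<in> grounded R" and ?w = "\<lambda>y. y \<in> attacked R (grounded R)"
  show "\<forall>B\<in>Delta S R \<union> CN_axioms S. eval ?v ?w B"
    using eval_Delta[OF assms defended_grounded] eval_CN_axioms[OF grounded_conflict_free]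
    by blast
qed

end
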